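(* Let $k,n$ be positive integers with $k\leqslant n$ and let $X\subseteq[n]^k_<$ be either an order ideal or an interval of $[n]^k_<$ in the Bruhat order. If $L$ is a linear extension of $X$, then $\partial_D L=\partial_H L$.
   Context: $[n]:=\{1,\ldots,n\}$; $[n]^k_<$ denotes the set of $k$-element subsets of $[n]$, identified with increasing tuples, with Bruhat order $x\leqslant y$ iff $x_i\leqslant y_i$ for all $i\in[k]$. An interval is a set $\{z: x\leqslant z\leqslant y\}$. A linear extension of $X$ is a tuple $L=(L_1,\ldots,L_h)$ listing each element of $X$ exactly once such that $L_i<L_j$ implies $i<j$. For a tuple $C=(C_1,\ldots,C_h)$ of distinct elements of $[n]^k_<$: the dual graph $D(C)$ is the graph on $[h]$ with $\{i,j\}$ an edge iff $|C_i\cap C_j|=k-1$; the Hasse graph $H(C)$ is the graph on $[h]$ with $\{i,j\}$ an edge iff one of $C_i,C_j$ covers the other in the Bruhat order. For a graph $G$ on $[h]$, its track $T_G=\{v_1,\ldots,v_r\}$ is defined by $v_1=1$ and, for $i\geqslant2$, $v_i=\min\{j\in[h]: j>v_{i-1},\ \{v_{i-1},j\}\text{ an edge}\}$ if this exists, otherwise $r=i-1$. The promotion $\partial_G\in S_h$ is given by $\partial_G(i)=i-1$ for $i\notin T_G$, $\partial_G(v_j)=v_{j+1}-1$ for $j\in[r-1]$, $\partial_G(v_r)=h$. For $\sigma\in S_h$, $\sigma C:=(C_{\sigma^{-1}(1)},\ldots,C_{\sigma^{-1}(h)})$. Define $\partial_D C:=\partial_{D(C)}C$ and $\partial_H C:=\partial_{H(C)}C$.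 *)

theory Defs
  imports Main
begin

text \<open>Elements of [n]^k_< are represented as finite sets of naturals A with
  A \<subseteq> {1..n} and card A = k; the associated increasing tuple is
  sorted_list_of_set A (0-indexed list).\<close>

definition ksubsets :: "nat \<Rightarrow> nat \<Rightarrow> nat set set" where
  "ksubsets n k = {A. A \<subseteq> {1..n} \<and> card A = k}"

definition bruhat_le :: "nat \<Rightarrow> nat set \<Rightarrow> nat set \<Rightarrow> bool" where
  "bruhat_le k x y = (\<forall>i<k. sorted_list_of_set x ! i \<le> sorted_list_of_set y ! i)"

definition bruhat_less :: "nat \<Rightarrow> nat set \<Rightarrow> nat set \<Rightarrow> bool" where
  "bruhat_less k x y = (bruhat_le k x y \<and> x \<noteq> y)"

definition bruhat_covers :: "nat \<Rightarrow> nat \<Rightarrow> nat set \<Rightarrow> nat set \<Rightarrow> bool" where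
  "bruhat_covers n k y x = (x \<in> ksubsets n k \<and> y \<in> ksubsets n k \<and> bruhat_less k x y \<and>
     \<not> (\<exists>z \<in> ksubsets n k. bruhat_less k x z \<and> bruhat_less k z y))"

definition order_ideal :: "nat \<Rightarrow> nat \<Rightarrow> nat set set \<Rightarrow> bool" where
  "order_ideal n k X = (X \<subseteq> ksubsets n k \<and>
     (\<forall>y\<in>X. \<forall>x\<in>ksubsets n k. bruhat_le k x y \<longrightarrow> x \<in> X))"

definition bruhat_interval :: "nat \<Rightarrow> nat \<Rightarrow> nat set \<Rightarrow> nat set \<Rightarrow> nat set set" where
  "bruhat_interval n k x y = {z \<in> ksubsets n k. bruhat_le k x z \<and> bruhat_le k z y}"

definition is_interval :: "nat \<Rightarrow> nat \<Rightarrow> nat set set \<Rightarrow> bool" where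
  "is_interval n k X = (\<exists>x\<in>ksubsets n k. \<exists>y\<in>ksubsets n k. X = bruhat_interval n k x y)"

text \<open>Tuples C = (C_1,...,C_h) are lists; C_i is C ! (i - 1).\<close>
definition linear_extension :: "nat \<Rightarrow> nat set set \<Rightarrow> nat set list \<Rightarrow> bool" where
  "linear_extension k X L = (distinct L \<and> set L = X \<and>
     (\<forall>i\<in>{1..length L}. \<forall>j\<in>{1..length L}.
        bruhat_less k (L ! (i - 1)) (L ! (j - 1)) \<longrightarrow> i < j))"

definition dual_graph :: "nat \<Rightarrow> nat set list \<Rightarrow> nat \<Rightarrow> nat \<Rightarrow> bool" where
  "dual_graph k C i j = (i \<noteq> j \<and> i \<in> {1..length C} \<and> j \<in> {1..length C} \<and>
     card (C ! (i - 1) \<inter> C ! (j - 1)) = k - 1)"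

definition hasse_graph :: "nat \<Rightarrow> nat \<Rightarrow> nat set list \<Rightarrow> nat \<Rightarrow> nat \<Rightarrow> bool" where
  "hasse_graph n k C i j = (i \<noteq> j \<and> i \<in> {1..length C} \<and> j \<in> {1..length C} \<and>
     (bruhat_covers n k (C ! (i - 1)) (C ! (j - 1)) \<or> bruhat_covers n k (C ! (j - 1)) (C ! (i - 1))))"

text \<open>Track of a graph G on [h]: v_1 = 1, v_i = min {j \<in> [h]. j > v_{i-1}, G v_{i-1} j}.\<close>
inductive_set track :: "(nat \<Rightarrow> nat \<Rightarrow> bool) \<Rightarrow> nat \<Rightarrow> nat set" for G h where
  start: "1 \<le> h \<Longrightarrow> 1 \<in> track G h"
| step: "v \<in> track G h \<Longrightarrow> \<exists>j. v < j \<and> j \<le> h \<and> G v j \<Longrightarrow>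
           (LEAST j. v < j \<and> j \<le> h \<and> G v j) \<in> track G h"

text \<open>Promotion: i \<mapsto> i-1 off the track, v_j \<mapsto> v_{j+1} - 1, v_r \<mapsto> h.\<close>
definition promotion :: "(nat \<Rightarrow> nat \<Rightarrow> bool) \<Rightarrow> nat \<Rightarrow> nat \<Rightarrow> nat" where
  "promotion G h i = (if i \<in> track G h then
       (if \<exists>j. i < j \<and> j \<le> h \<and> G i j then (LEAST j. i < j \<and> j \<le> h \<and> G i j) - 1 else h)
     else i - 1)"

definition perm_act :: "(nat \<Rightarrow> nat) \<Rightarrow> 'a list \<Rightarrow> 'a list" where
  "perm_act \<sigma> C = map (\<lambda>i. C ! (inv_into {1..length C} \<sigma> i - 1)) [1..<length C + 1]"

definition promD :: "nat \<Rightarrow> nat set list \<Rightarrow> nat set list" where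
  "promD k C = perm_act (promotion (dual_graph k C) (length C)) C"

definition promH :: "nat \<Rightarrow> nat \<Rightarrow> nat set list \<Rightarrow> nat set list" where
  "promH n k C = perm_act (promotion (hasse_graph n k C) (length C)) C"

end

theory Submission
  imports Defs
begin

text \<open>Promotion along a graph only looks at the first forward neighbour of each position,
  so it suffices that every forward edge from v to j in one graph is weakly preceded by a
  forward edge from v to some m with v < m \<le> j in the other. Both kinds of edges go upwards
  along L: a cover does, and two k-sets sharing k - 1 elements differ by a single exchange,
  hence are comparable. Given L_v < L_j, raising the last entry in which the two tuples
  differ by one yields z with L_v < z \<le> L_j and |L_v \<inter> z| = k - 1, and a rank-minimal
  element strictly above L_v and below L_j is a cover z \<le> L_j. Convexity of X puts z into X,
  and then z occurs in L strictly after position v and not after position j.\<close>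

lemma sorted_list_of_set_nth_less_iff:
  fixes A :: "'a::linorder set"
  assumes "i < card A" "j < card A"
  shows "sorted_list_of_set A ! i < sorted_list_of_set A ! j \<longleftrightarrow> i < j"
  using assms sorted_wrt_nth_less[OF sorted_list_of_set.strict_sorted_key_list_of_set, of _ _ A]
  by (metis length_sorted_list_of_set linorder_neq_iff order_less_asym)

lemma card_greater_sorted_list_of_set_nth:
  fixes A :: "'a::linorder set"
  assumes "finite A" "i < card A"
  shows "card {a \<in> A. sorted_list_of_set A ! i < a} = card A - Suc i"
proof -
  let ?xs = "sorted_list_of_set A"
  have "{a \<in> A. ?xs ! i < a} = (!) ?xs ` {Suc i..<card A}"
  proof (intro equalityI subsetI)
    fix a assume a: "a \<in> {a \<in> A. ?xs ! i < a}"
    then have "a \<in> set ?xs" using assms(1) by simp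
    then obtain j where "j < card A" "a = ?xs ! j" by (auto simp: in_set_conv_nth)
    with a show "a \<in> (!) ?xs ` {Suc i..<card A}"
      using assms sorted_list_of_set_nth_less_iff by fastforce
  next
    fix a assume "a \<in> (!) ?xs ` {Suc i..<card A}"
    then show "a \<in> {a \<in> A. ?xs ! i < a}"
      using assms sorted_list_of_set_nth_less_iff[of i A] nth_mem[of _ ?xs] by auto
  qed
  moreover have "inj_on ((!) ?xs) {Suc i..<card A}"
    by (intro inj_onI) (simp add: nth_eq_iff_index_eq)
  ultimately show ?thesis by (simp add: card_image)
qed

lemma card_atLeast_sorted_list_of_set_nth:
  fixes A :: "'a::linorder set"
  assumes "finite A" "i < card A"
  shows "card {a \<in> A. sorted_list_of_set A ! i \<le> a} = card A - i"
proof -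
  have "sorted_list_of_set A ! i \<in> A"
    using assms nth_mem[of i "sorted_list_of_set A"] by simp
  then have "{a \<in> A. sorted_list_of_set A ! i \<le> a}
      = insert (sorted_list_of_set A ! i) {a \<in> A. sorted_list_of_set A ! i < a}"
    by auto
  then show ?thesis
    using assms card_greater_sorted_list_of_set_nth[OF assms] by simp
qed

text \<open>Otherwise f would map the card A - i elements of A from its i-th one upwards
  injectively into the card B - i - 1 elements of B above its i-th one.\<close>
lemma sorted_list_of_set_nth_le_if_inj_increasing:
  fixes A B :: "'a::linorder set"
  assumes "finite A" "finite B" "card A = card B" "inj_on f A" "f ` A \<subseteq> B"
    and "\<And>a. a \<in> A \<Longrightarrow> a \<le> f a" and "i < card A"
  shows "sorted_list_of_set A ! i \<le> sorted_list_of_set B ! i"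
proof (rule ccontr)
  let ?t = "sorted_list_of_set A ! i"
  assume "\<not> ?t \<le> sorted_list_of_set B ! i"
  then have "f ` {a \<in> A. ?t \<le> a} \<subseteq> {b \<in> B. sorted_list_of_set B ! i < b}"
  proof (intro image_subsetI)
    fix a assume "a \<in> {a \<in> A. ?t \<le> a}"
    then show "f a \<in> {b \<in> B. sorted_list_of_set B ! i < b}"
      using assms(5,6) \<open>\<not> ?t \<le> sorted_list_of_set B ! i\<close> by fastforce
  qed
  then have "card (f ` {a \<in> A. ?t \<le> a}) \<le> card {b \<in> B. sorted_list_of_set B ! i < b}"
    using assms(2) by (intro card_mono) auto
  moreover have "card (f ` {a \<in> A. ?t \<le> a}) = card {a \<in> A. ?t \<le> a}"
    using assms(4) by (intro card_image) (auto intro: inj_on_subset)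
  ultimately show False
    using card_atLeast_sorted_list_of_set_nth[OF assms(1,7)]
      card_greater_sorted_list_of_set_nth[OF assms(2), of i] assms(3,7)
    by simp
qed

lemma ksubsetsD:
  assumes "x \<in> ksubsets n k"
  shows "finite x" "card x = k" "x \<subseteq> {1..n}"
  using assms finite_subset[of x "{1..n}"] by (auto simp: ksubsets_def)

lemma bruhat_le_refl: "bruhat_le k x x"
  by (simp add: bruhat_le_def)

lemma bruhat_le_trans: "bruhat_le k x y \<Longrightarrow> bruhat_le k y z \<Longrightarrow> bruhat_le k x z"
  unfolding bruhat_le_def using le_trans by blast

lemma bruhat_le_antisym:
  assumes "x \<in> ksubsets n k" "y \<in> ksubsets n k" "bruhat_le k x y" "bruhat_le k y x"
  shows "x = y"
proof -
  have "sorted_list_of_set x = sorted_list_of_set y"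
    using assms by (intro nth_equalityI) (auto simp: ksubsetsD bruhat_le_def intro: order.antisym)
  then show ?thesis
    using assms(1,2) by (metis ksubsetsD(1) set_sorted_list_of_set)
qed

lemma bruhat_less_imp_nth_less:
  assumes "x \<in> ksubsets n k" "y \<in> ksubsets n k" "bruhat_less k x y"
  shows "\<exists>i<k. sorted_list_of_set x ! i < sorted_list_of_set y ! i"
  using assms bruhat_le_antisym[OF assms(1,2)]
  by (force simp: bruhat_less_def bruhat_le_def)

lemma bruhat_le_replace_by_greater:
  fixes A :: "nat set"
  assumes "finite A" "p \<in> A" "q \<notin> A" "p < q"
  shows "bruhat_le (card A) A (insert q (A - {p}))"
  unfolding bruhat_le_def
proof (intro allI impI)
  fix i assume "i < card A"
  let ?f = "\<lambda>a. if a = p then q else a"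
  have "inj_on ?f A" "?f ` A \<subseteq> insert q (A - {p})" "\<And>a. a \<in> A \<Longrightarrow> a \<le> ?f a"
    using assms by (auto intro!: inj_onI split: if_splits)
  moreover have "card A = card (insert q (A - {p}))"
  proof -
    have "card A \<noteq> 0" using assms(1,2) by auto
    then show ?thesis using assms(1-3) by (simp del: card_0_eq)
  qed
  ultimately show "sorted_list_of_set A ! i \<le> sorted_list_of_set (insert q (A - {p})) ! i"
    using assms(1) \<open>i < card A\<close>
    by (intro sorted_list_of_set_nth_le_if_inj_increasing[of A _ ?f]) simp_all
qed

lemma dual_edge_imp_bruhat_comparable:
  assumes "x \<in> ksubsets n k" "y \<in> ksubsets n k" "x \<noteq> y" "card (x \<inter> y) = k - 1"
  shows "bruhat_less k x y \<or> bruhat_less k y x"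
proof -
  have fin: "finite x" "finite y" and card: "card x = k" "card y = k"
    using assms(1,2) by (auto simp: ksubsetsD)
  then have "0 < k"
    using assms(3) by (metis card_0_eq gr0I)
  have "card (x - y) = 1" "card (y - x) = 1"
    using \<open>0 < k\<close> assms(4) fin card by (simp_all add: card_Diff_subset_Int Int_commute)
  then obtain a b where a: "x - y = {a}" and b: "y - x = {b}"
    by (meson card_1_singletonE)
  then have "a \<noteq> b" "y = insert b (x - {a})" "x = insert a (y - {b})"
    by blast+
  moreover have "a \<in> x" "b \<notin> x" "b \<in> y" "a \<notin> y"
    using a b by blast+
  ultimately show ?thesis
    using bruhat_le_replace_by_greater[of x a b] bruhat_le_replace_by_greater[of y b a] fin card assms(3)
    by (metis bruhat_less_def linorder_neq_iff)
qed

lemma sorted_wrt_less_list_update_Suc: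
  fixes xs :: "nat list"
  assumes "sorted_wrt (<) xs" "i < length xs"
    and "Suc i < length xs \<Longrightarrow> Suc (xs ! i) < xs ! Suc i"
  shows "sorted_wrt (<) (xs[i := Suc (xs ! i)])"
  unfolding sorted_wrt_iff_nth_less
proof (intro allI impI)
  fix p q assume pq: "p < q" "q < length (xs[i := Suc (xs ! i)])"
  have mono: "xs ! p' < xs ! q'" if "p' < q'" "q' < length xs" for p' q'
    using sorted_wrt_nth_less[OF assms(1) that] .
  show "xs[i := Suc (xs ! i)] ! p < xs[i := Suc (xs ! i)] ! q"
  proof (cases "p = i")
    case True
    moreover have "xs ! Suc i \<le> xs ! q"
      using pq True mono[of "Suc i" q] by (cases "Suc i = q") auto
    ultimately have "Suc (xs ! i) < xs ! q"
      using pq assms(3) by fastforce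
    then show ?thesis using True pq by simp
  next
    case False
    then show ?thesis using pq mono[of p q] mono[of p i] by (cases "q = i") auto
  qed
qed

lemma bruhat_less_imp_last_strict_index:
  assumes "x \<in> ksubsets n k" "y \<in> ksubsets n k" "bruhat_less k x y"
  obtains i where "i < k" "sorted_list_of_set x ! i < sorted_list_of_set y ! i"
    "\<And>j. i < j \<Longrightarrow> j < k \<Longrightarrow> sorted_list_of_set x ! j = sorted_list_of_set y ! j"
proof -
  define I where "I = {i. i < k \<and> sorted_list_of_set x ! i < sorted_list_of_set y ! i}"
  have "finite I" "I \<noteq> {}"
    using bruhat_less_imp_nth_less[OF assms] by (auto simp: I_def)
  show ?thesis
  proof (rule that)
    show "Max I < k" "sorted_list_of_set x ! Max I < sorted_list_of_set y ! Max I"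
      using Max_in[OF \<open>finite I\<close> \<open>I \<noteq> {}\<close>] by (simp_all add: I_def)
    fix j assume "Max I < j" "j < k"
    then have "j \<notin> I"
      using Max_ge[OF \<open>finite I\<close>] not_le by blast
    moreover have "sorted_list_of_set x ! j \<le> sorted_list_of_set y ! j"
      using assms(3) \<open>j < k\<close> by (simp add: bruhat_less_def bruhat_le_def)
    ultimately show "sorted_list_of_set x ! j = sorted_list_of_set y ! j"
      using \<open>j < k\<close> by (simp add: I_def)
  qed
qed

lemma sorted_list_of_set_raise_nth:
  fixes x :: "nat set" and i :: nat
  defines "a \<equiv> sorted_list_of_set x ! i"
  assumes "finite x" "i < card x"
    and "Suc i < card x \<Longrightarrow> Suc a < sorted_list_of_set x ! Suc i"
  shows "Suc a \<notin> x"
    and "sorted_list_of_set (insert (Suc a) (x - {a})) = (sorted_list_of_set x)[i := Suc a]"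
proof -
  let ?xs = "sorted_list_of_set x"
  have sorted: "sorted_wrt (<) (?xs[i := Suc a])"
    using assms(2-4) unfolding a_def by (intro sorted_wrt_less_list_update_Suc) simp_all
  have set_eq: "set (?xs[i := Suc a]) = insert (Suc a) (x - {a})"
    using assms(2,3) by (simp add: a_def set_update_distinct)
  have "a \<in> x"
    using assms(2,3) nth_mem[of i ?xs] by (simp add: a_def)
  show "Suc a \<notin> x"
  proof
    assume "Suc a \<in> x"
    then have "set (?xs[i := Suc a]) = x - {a}"
      using set_eq by auto
    moreover have "card (set (?xs[i := Suc a])) = card x"
      using sorted by (simp add: strict_sorted_iff distinct_card)
    ultimately show False
      using \<open>a \<in> x\<close> assms(2) card_Diff1_less[of x a] by simp
  qed
  show "sorted_list_of_set (insert (Suc a) (x - {a})) = ?xs[i := Suc a]"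
    using sorted by (simp flip: set_eq add: strict_sorted_iff sorted_list_of_set.idem_if_sorted_distinct)
qed

lemma bruhat_less_imp_dual_step:
  assumes "x \<in> ksubsets n k" "y \<in> ksubsets n k" "bruhat_less k x y"
  obtains z where "z \<in> ksubsets n k" "bruhat_less k x z" "bruhat_le k z y" "card (x \<inter> z) = k - 1"
proof -
  let ?xs = "sorted_list_of_set x" and ?ys = "sorted_list_of_set y"
  obtain i where i: "i < k" "?xs ! i < ?ys ! i"
    and above: "\<And>j. i < j \<Longrightarrow> j < k \<Longrightarrow> ?xs ! j = ?ys ! j"
    using bruhat_less_imp_last_strict_index[OF assms] by blast
  have fin: "finite x" and card: "card x = k"
    using assms(1) by (simp_all add: ksubsetsD)
  define a where "a = ?xs ! i"
  define z where "z = insert (Suc a) (x - {a})"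
  have "Suc a < ?xs ! Suc i" if "Suc i < k"
    using i above[of "Suc i"] that assms(2)
      sorted_wrt_nth_less[OF strict_sorted_list_of_set, of i "Suc i" y]
    by (simp add: a_def ksubsetsD)
  then have new: "Suc a \<notin> x" and sl_z: "sorted_list_of_set z = ?xs[i := Suc a]"
    using sorted_list_of_set_raise_nth[OF fin, of i] i card by (simp_all add: a_def z_def)
  have a_in: "a \<in> x"
    using fin i card nth_mem[of i ?xs] by (simp add: a_def)
  have "bruhat_le k x z"
    using bruhat_le_replace_by_greater[OF fin a_in new] card by (simp add: z_def)
  moreover have "bruhat_le k z y"
    using assms(3) i card by (auto simp: sl_z a_def bruhat_less_def bruhat_le_def nth_list_update)
  moreover have "z \<in> ksubsets n k"
  proof -
    have "Suc a \<le> n"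
      using i card nth_mem[of i ?ys] ksubsetsD[OF assms(2)] by (force simp: a_def)
    moreover have "card x \<noteq> 0"
      using fin a_in by auto
    ultimately show ?thesis
      using fin card a_in new ksubsetsD(3)[OF assms(1)] by (auto simp: z_def ksubsets_def)
  qed
  moreover have "x \<noteq> z" "card (x \<inter> z) = k - 1"
    using a_in new fin card by (auto simp: z_def Int_insert_right Int_absorb1)
  ultimately show ?thesis
    using that by (simp add: bruhat_less_def)
qed

definition bruhat_rank :: "nat \<Rightarrow> nat set \<Rightarrow> nat" where
  "bruhat_rank k z = (\<Sum>i<k. sorted_list_of_set z ! i)"

lemma bruhat_rank_strict_mono:
  assumes "x \<in> ksubsets n k" "y \<in> ksubsets n k" "bruhat_less k x y"
  shows "bruhat_rank k x < bruhat_rank k y"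
  unfolding bruhat_rank_def
proof (rule sum_strict_mono_ex1)
  show "\<forall>i\<in>{..<k}. sorted_list_of_set x ! i \<le> sorted_list_of_set y ! i"
    using assms(3) by (simp add: bruhat_less_def bruhat_le_def)
  show "\<exists>i\<in>{..<k}. sorted_list_of_set x ! i < sorted_list_of_set y ! i"
    using bruhat_less_imp_nth_less[OF assms] by auto
qed simp

lemma bruhat_less_imp_cover_below:
  assumes "x \<in> ksubsets n k" "y \<in> ksubsets n k" "bruhat_less k x y"
  obtains z where "bruhat_covers n k z x" "bruhat_le k z y"
proof -
  define P where "P z \<longleftrightarrow> z \<in> ksubsets n k \<and> bruhat_less k x z \<and> bruhat_le k z y" for z
  have "P y"
    using assms(2,3) bruhat_le_refl by (simp add: P_def)
  then obtain z where z: "P z" and z_min: "\<And>w. P w \<Longrightarrow> bruhat_rank k z \<le> bruhat_rank k w"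
    using ex_has_least_nat[of P y "bruhat_rank k"] by blast
  have "\<not> (bruhat_less k x w \<and> bruhat_less k w z)" if "w \<in> ksubsets n k" for w
  proof
    assume w: "bruhat_less k x w \<and> bruhat_less k w z"
    then have "P w"
      using that z bruhat_le_trans by (auto simp: P_def bruhat_less_def)
    moreover have "bruhat_rank k w < bruhat_rank k z"
      using bruhat_rank_strict_mono[OF that _ conjunct2[OF w]] z by (simp add: P_def)
    ultimately show False
      using z_min by (simp add: not_le[symmetric])
  qed
  then have "bruhat_covers n k z x"
    using assms(1) z by (auto simp: bruhat_covers_def P_def)
  then show ?thesis
    using z that by (simp add: P_def)
qed

lemma Least_eq_if_interleaved:
  fixes P Q :: "nat \<Rightarrow> bool"
  assumes "\<And>j. P j \<Longrightarrow> \<exists>m\<le>j. Q m" and "\<And>j. Q j \<Longrightarrow> \<exists>m\<le>j. P m"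
  shows "Least P = Least Q"
proof (cases "Ex P")
  case True
  then have "Ex Q"
    using assms(1) by blast
  have "Least Q \<le> Least P"
    using assms(1)[OF LeastI_ex[OF \<open>Ex P\<close>]] by (metis Least_le le_trans)
  moreover have "Least P \<le> Least Q"
    using assms(2)[OF LeastI_ex[OF \<open>Ex Q\<close>]] by (metis Least_le le_trans)
  ultimately show ?thesis
    by simp
next
  case False
  then have "P = Q"
    using assms(2) by auto
  then show ?thesis
    by simp
qed

lemma track_subset_if_first_neighbours_eq:
  assumes "\<And>v. (\<exists>j. v < j \<and> j \<le> h \<and> G v j) \<longleftrightarrow> (\<exists>j. v < j \<and> j \<le> h \<and> G' v j)"
    and "\<And>v. (LEAST j. v < j \<and> j \<le> h \<and> G v j) = (LEAST j. v < j \<and> j \<le> h \<and> G' v j)"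
  shows "track G h \<subseteq> track G' h"
proof
  fix t assume "t \<in> track G h"
  then show "t \<in> track G' h"
  proof (induction rule: track.induct)
    case start
    then show ?case by (rule track.start)
  next
    case (step v)
    then show ?case using track.step[of v G' h] assms by simp
  qed
qed

lemma promotion_eq_if_forward_edges_interleaved:
  assumes "\<And>v j. v < j \<Longrightarrow> j \<le> h \<Longrightarrow> G v j \<Longrightarrow> \<exists>m. v < m \<and> m \<le> j \<and> G' v m"
    and "\<And>v j. v < j \<Longrightarrow> j \<le> h \<Longrightarrow> G' v j \<Longrightarrow> \<exists>m. v < m \<and> m \<le> j \<and> G v m"
  shows "promotion G h = promotion G' h"
proof -
  have ex: "(\<exists>j. v < j \<and> j \<le> h \<and> G v j) \<longleftrightarrow> (\<exists>j. v < j \<and> j \<le> h \<and> G' v j)" for v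
    using assms by (meson le_trans)
  have least: "(LEAST j. v < j \<and> j \<le> h \<and> G v j) = (LEAST j. v < j \<and> j \<le> h \<and> G' v j)" for v
    using assms by (intro Least_eq_if_interleaved) (meson le_trans)+
  have "track G h = track G' h"
    using track_subset_if_first_neighbours_eq[of h G G'] track_subset_if_first_neighbours_eq[of h G' G]
      ex least by auto
  then show ?thesis
    unfolding promotion_def by (intro ext) (simp only: ex least)
qed

definition bruhat_convex :: "nat \<Rightarrow> nat \<Rightarrow> nat set set \<Rightarrow> bool" where
  "bruhat_convex n k X \<longleftrightarrow> X \<subseteq> ksubsets n k \<and>
     (\<forall>a\<in>X. \<forall>b\<in>X. \<forall>z\<in>ksubsets n k. bruhat_le k a z \<longrightarrow> bruhat_le k z b \<longrightarrow> z \<in> X)"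

lemma order_ideal_imp_bruhat_convex: "order_ideal n k X \<Longrightarrow> bruhat_convex n k X"
  by (auto simp: order_ideal_def bruhat_convex_def)

lemma is_interval_imp_bruhat_convex: "is_interval n k X \<Longrightarrow> bruhat_convex n k X"
  by (auto simp: is_interval_def bruhat_interval_def bruhat_convex_def intro: bruhat_le_trans)

lemma linear_extension_comparable_imp_less:
  assumes "linear_extension k X L" "0 < v" "v < j" "j \<le> length L"
    and "bruhat_le k (L ! (v - 1)) (L ! (j - 1)) \<or> bruhat_le k (L ! (j - 1)) (L ! (v - 1))"
  shows "bruhat_less k (L ! (v - 1)) (L ! (j - 1))"
proof -
  have "L ! (v - 1) \<noteq> L ! (j - 1)"
    using assms(1-4) by (simp add: linear_extension_def nth_eq_iff_index_eq)
  moreover have "\<not> bruhat_less k (L ! (j - 1)) (L ! (v - 1))"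
  proof
    assume "bruhat_less k (L ! (j - 1)) (L ! (v - 1))"
    moreover have "j \<in> {1..length L}" "v \<in> {1..length L}"
      using assms(2-4) by auto
    ultimately have "j < v"
      using assms(1) unfolding linear_extension_def by blast
    then show False
      using assms(3) by simp
  qed
  ultimately show ?thesis
    using assms(5) by (auto simp: bruhat_less_def)
qed

lemma linear_extension_between:
  assumes "bruhat_convex n k X" "linear_extension k X L"
    and "v \<in> {1..length L}" "j \<in> {1..length L}" "z \<in> ksubsets n k"
    and "bruhat_less k (L ! (v - 1)) z" "bruhat_le k z (L ! (j - 1))"
  obtains m where "v < m" "m \<le> j" "L ! (m - 1) = z"
proof -
  have L: "distinct L" "set L = X"
    and ord: "\<And>i j. i \<in> {1..length L} \<Longrightarrow> j \<in> {1..length L} \<Longrightarrow>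
                bruhat_less k (L ! (i - 1)) (L ! (j - 1)) \<Longrightarrow> i < j"
    using assms(2) by (auto simp: linear_extension_def)
  have "L ! (v - 1) \<in> X" "L ! (j - 1) \<in> X"
    using assms(3,4) L(2) by auto
  then have "z \<in> X"
    using assms(1,5-7) unfolding bruhat_convex_def bruhat_less_def by blast
  then have "z \<in> set L"
    using L(2) by simp
  then obtain p where p: "p < length L" "L ! p = z"
    by (auto simp: in_set_conv_nth)
  define m where "m = Suc p"
  have m: "m \<in> {1..length L}" "L ! (m - 1) = z"
    using p by (simp_all add: m_def)
  have "v < m"
    using ord[OF assms(3) m(1)] assms(6) m(2) by simp
  moreover have "m \<le> j"
  proof (cases "z = L ! (j - 1)")
    case True
    then show ?thesis
      using m assms(4) L(1) by (auto simp: nth_eq_iff_index_eq)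
  next
    case False
    then show ?thesis
      using ord[OF m(1) assms(4)] assms(7) m(2) by (simp add: bruhat_less_def)
  qed
  ultimately show ?thesis
    using m(2) that by blast
qed

lemma hasse_edge_imp_dual_edge_before:
  assumes "bruhat_convex n k X" "linear_extension k X L" "v < j" "hasse_graph n k L v j"
  obtains m where "v < m" "m \<le> j" "dual_graph k L v m"
proof -
  have vj: "v \<in> {1..length L}" "j \<in> {1..length L}"
    using assms(4) by (auto simp: hasse_graph_def)
  have XK: "X \<subseteq> ksubsets n k"
    using assms(1) by (simp add: bruhat_convex_def)
  have "bruhat_less k (L ! (v - 1)) (L ! (j - 1))"
    using assms(2-4) vj
    by (intro linear_extension_comparable_imp_less)
      (auto simp: hasse_graph_def bruhat_covers_def bruhat_less_def)
  moreover have "L ! (v - 1) \<in> ksubsets n k" "L ! (j - 1) \<in> ksubsets n k"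
    using assms(2) vj XK by (auto simp: linear_extension_def)
  ultimately obtain z where z: "z \<in> ksubsets n k" "bruhat_less k (L ! (v - 1)) z"
    "bruhat_le k z (L ! (j - 1))" "card (L ! (v - 1) \<inter> z) = k - 1"
    by (metis bruhat_less_imp_dual_step)
  obtain m where "v < m" "m \<le> j" "L ! (m - 1) = z"
    using linear_extension_between[OF assms(1,2) vj z(1-3)] .
  then show ?thesis
    using that vj z(4) by (simp add: dual_graph_def)
qed

lemma dual_edge_imp_hasse_edge_before:
  assumes "bruhat_convex n k X" "linear_extension k X L" "v < j" "dual_graph k L v j"
  obtains m where "v < m" "m \<le> j" "hasse_graph n k L v m"
proof -
  have vj: "v \<in> {1..length L}" "j \<in> {1..length L}"
    using assms(4) by (auto simp: dual_graph_def)
  have XK: "X \<subseteq> ksubsets n k"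
    using assms(1) by (simp add: bruhat_convex_def)
  have in_K: "L ! (v - 1) \<in> ksubsets n k" "L ! (j - 1) \<in> ksubsets n k"
    using assms(2) vj XK by (auto simp: linear_extension_def)
  have "L ! (v - 1) \<noteq> L ! (j - 1)"
    using assms(2,3) vj by (simp add: linear_extension_def nth_eq_iff_index_eq)
  then have "bruhat_less k (L ! (v - 1)) (L ! (j - 1))"
    using assms(2-4) vj dual_edge_imp_bruhat_comparable[OF in_K]
    by (intro linear_extension_comparable_imp_less) (auto simp: dual_graph_def bruhat_less_def)
  then obtain z where z: "bruhat_covers n k z (L ! (v - 1))" "bruhat_le k z (L ! (j - 1))"
    using bruhat_less_imp_cover_below[OF in_K] by blast
  then have "z \<in> ksubsets n k" "bruhat_less k (L ! (v - 1)) z"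
    by (simp_all add: bruhat_covers_def)
  then obtain m where "v < m" "m \<le> j" "L ! (m - 1) = z"
    using linear_extension_between[OF assms(1,2) vj] z(2) by blast
  then show ?thesis
    using that vj z(1) by (simp add: hasse_graph_def)
qed

theorem promD_eq_promH_if_bruhat_convex:
  assumes "bruhat_convex n k X" "linear_extension k X L"
  shows "promD k L = promH n k L"
proof -
  have "promotion (dual_graph k L) (length L) = promotion (hasse_graph n k L) (length L)"
    by (rule promotion_eq_if_forward_edges_interleaved)
      (meson assms dual_edge_imp_hasse_edge_before hasse_edge_imp_dual_edge_before)+
  then show ?thesis
    by (simp add: promD_def promH_def)
qed

theorem corollary5p8:
  fixes n k :: nat and X :: "nat set set" and L :: "nat set list"
  assumes "0 < k" and "k \<le> n"
    and "order_ideal n k X \<or> is_interval n k X"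
    and "linear_extension k X L"
  shows "promD k L = promH n k L"
  using assms(3,4) order_ideal_imp_bruhat_convex is_interval_imp_bruhat_convex
    promD_eq_promH_if_bruhat_convex by blast

end
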